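(* Fix $s\geqslant2$. For $n\geqslant2$ and $k=1,\dots,n$, put $Y_{n,k}=X_{n,s,k}-p_s$. Define \[\overline Y_{n,s}=\overline X_{n,s}-p_s=\frac1n\sum_{i=1}^nY_{n,i},\qquad \overline Z_{n,s}=\frac1{n-1}\,(Y_{n,1}+\dots+Y_{n,n-1}).\] Then $F_{\overline Z_{n,s}}-F_{\overline Y_{n,s}}\to0$ uniformly on $\mathbb R$ as $n\to\infty$, where $F_X$ denotes the distribution function of a random variable $X$. The objects $X_{n,s,i}$, $\overline X_{n,s}$ and $p_s$ are defined in the context.
   Context: Consider the tiling of the plane by regular hexagons of side $1$, called cells. For an integer $s\geqslant2$, fix a cell $O$. Let $M_s$ be the set of all cells lying inside the regular hexagon that is centred at the centre of $O$, has sides of length $s\sqrt3$, and has its sides perpendicular to sides of the cells. The set $M_s$ has $m+1=1+3s(s-1)$ cells. Number the cells other than $O$ as $v_1,\dots,v_m$. Two cells are neighbours if they share a side. A cell of $M_s$ is a boundary cell if it has fewer than six neighbours in $M_s$. For an integer $n\geqslant2$, let $\Omega_{n,s}$ be the set of $n$-tuples $f=(f_1,\dots,f_n)$ of functions $f_i:\{v_1,\dots,v_m\}\to\{0,1\}$ such that $f_1+\dots+f_n\equiv1\pmod 2$ at every cell. Equip $\Omega_{n,s}$ with the uniform probability measure $P(A)=|A|\,2^{-(n-1)m}$. A path from the centre to the boundary is a sequence of pairwise distinct cells $v_{j_1},\dots,v_{j_t}$ with the following properties: - $v_{j_1}$ is a neighbour of $O$; - $v_{j_l}$ and $v_{j_{l+1}}$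 are neighbours for each $l$; - $v_{j_t}$ is a boundary cell. The $i$-th fluid flows from the centre to the boundary for $f$ if there is such a path with $f_i(v_{j_l})=1$ for all $l$. Let $A_{n,s,i}$ be this event and $X_{n,s,i}$ its indicator. Set $\overline X_{n,s}=\frac1n\sum_{i=1}^nX_{n,s,i}$. The probability $P(A_{n,s,i})$ does not depend on $n$ or $i$; denote it by $p_s$. *)

theory Defs
  imports "HOL-Probability.Probability"
begin

text \<open>Hexagonal cells in axial coordinates; the centre cell O is (0,0).
  The six neighbours of a cell differ from it by (1,0),(0,1),(1,-1) and their negatives.\<close>

type_synonym cell = "int \<times> int"

definition hexnorm :: "cell \<Rightarrow> int" where
  "hexnorm c = max \<bar>fst c\<bar> (max \<bar>snd c\<bar> \<bar>fst c + snd c\<bar>)"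

definition nbr :: "cell \<Rightarrow> cell \<Rightarrow> bool" where
  "nbr a b \<longleftrightarrow> hexnorm (fst a - fst b, snd a - snd b) = 1"

text \<open>M_s: cells inside the hexagon of side s*sqrt 3 (1 + 3s(s-1) cells).\<close>
definition Mset :: "nat \<Rightarrow> cell set" where
  "Mset s = {c. hexnorm c \<le> int s - 1}"

definition Vset :: "nat \<Rightarrow> cell set" where
  "Vset s = Mset s - {(0, 0)}"

definition boundary :: "nat \<Rightarrow> cell \<Rightarrow> bool" where
  "boundary s c \<longleftrightarrow> c \<in> Mset s \<and> card {d \<in> Mset s. nbr c d} < 6"

text \<open>Omega_{n,s}: tuples (f_1..f_n) of 0/1-valued functions on the cells v_j with odd sum
  everywhere; encoded as f :: nat => cell => bool, extensional (False outside 1..n and V).\<close>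
definition Omega :: "nat \<Rightarrow> nat \<Rightarrow> (nat \<Rightarrow> cell \<Rightarrow> bool) set" where
  "Omega n s = {f. (\<forall>i c. f i c \<longrightarrow> i \<in> {1..n} \<and> c \<in> Vset s) \<and>
                   (\<forall>c\<in>Vset s. odd (card {i \<in> {1..n}. f i c}))}"

definition Pr :: "nat \<Rightarrow> nat \<Rightarrow> (nat \<Rightarrow> cell \<Rightarrow> bool) pmf" where
  "Pr n s = pmf_of_set (Omega n s)"

definition flows :: "nat \<Rightarrow> nat \<Rightarrow> (nat \<Rightarrow> cell \<Rightarrow> bool) \<Rightarrow> bool" where
  "flows s i f \<longleftrightarrow> (\<exists>p. p \<noteq> [] \<and> distinct p \<and> set p \<subseteq> Vset s \<and>
      nbr (0, 0) (hd p) \<and> (\<forall>l. Suc l < length p \<longrightarrow> nbr (p ! l) (p ! Suc l)) \<and>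
      boundary s (last p) \<and> (\<forall>c\<in>set p. f i c))"

definition Xind :: "nat \<Rightarrow> nat \<Rightarrow> (nat \<Rightarrow> cell \<Rightarrow> bool) \<Rightarrow> real" where
  "Xind s i f = (if flows s i f then 1 else 0)"

text \<open>p_s = P(A_{n,s,i}), which is independent of n and i; we take n = 2, i = 1.\<close>
definition ps :: "nat \<Rightarrow> real" where
  "ps s = measure_pmf.prob (Pr 2 s) {f. flows s 1 f}"

definition Xbar :: "nat \<Rightarrow> nat \<Rightarrow> (nat \<Rightarrow> cell \<Rightarrow> bool) \<Rightarrow> real" where
  "Xbar n s f = (\<Sum>i = 1..n. Xind s i f) / real n"

definition Yv :: "nat \<Rightarrow> nat \<Rightarrow> (nat \<Rightarrow> cell \<Rightarrow> bool) \<Rightarrow> real" where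
  "Yv s k f = Xind s k f - ps s"

definition Ybar :: "nat \<Rightarrow> nat \<Rightarrow> (nat \<Rightarrow> cell \<Rightarrow> bool) \<Rightarrow> real" where
  "Ybar n s f = Xbar n s f - ps s"

definition Zbar :: "nat \<Rightarrow> nat \<Rightarrow> (nat \<Rightarrow> cell \<Rightarrow> bool) \<Rightarrow> real" where
  "Zbar n s f = (\<Sum>i = 1..n - 1. Yv s i f) / (real n - 1)"

definition distfun :: "'a pmf \<Rightarrow> ('a \<Rightarrow> real) \<Rightarrow> real \<Rightarrow> real" where
  "distfun M X x = measure_pmf.prob M {w. X w \<le> x}"

end

theory Submission
  imports Defs
begin

text \<open>Let \<open>S\<close> be the number of fluids among the first \<open>n - 1\<close> that flow.  In a uniform
  element of \<open>\<Omega>\<^sub>n\<^sub>,\<^sub>s\<close> the first \<open>n - 1\<close> functions are independent and uniform (the last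
  one is determined by the parity condition), so \<open>S\<close> is binomial with parameters \<open>n - 1\<close> and
  \<open>p\<^sub>s\<close>, where \<open>0 < p\<^sub>s < 1\<close>.  Since \<open>Z = S / (n - 1) - p\<^sub>s\<close> and
  \<open>Y = (S + X\<^sub>n) / n - p\<^sub>s\<close> with \<open>0 \<le> X\<^sub>n \<le> 1\<close>, the events \<open>Z \<le> x\<close> and \<open>Y \<le> x\<close>
  can only differ when \<open>S\<close> lies within distance 1 of \<open>(n - 1)(x + p\<^sub>s)\<close>, i.e. takes one of
  two values.  Hence \<open>|F\<^sub>Z(x) - F\<^sub>Y(x)|\<close> is at most twice the largest point probability of
  the binomial law.  That tends to 0: if \<open>k \<le> np\<close> and \<open>2L\<^sup>2 \<le> npq\<close>, the ratio of consecutive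
  point probabilities is at least \<open>1 - L/(npq)\<close> on \<open>k, \<dots>, k + L\<close>, so the \<open>L\<close> point
  probabilities from \<open>k\<close> on are all at least half the one at \<open>k\<close>, which is therefore at most
  \<open>2/L\<close>; the case \<open>k > np\<close> follows by symmetry.\<close>

section \<open>Point probabilities of the binomial distribution\<close>

lemma binomial_pmf_Suc_ratio:
  assumes "p \<in> {0..1}"
  shows "pmf (binomial_pmf n p) (Suc j) * real (Suc j) * (1 - p)
           = pmf (binomial_pmf n p) j * real (n - j) * p"
proof (cases "j < n")
  case True
  have choose: "real (n choose Suc j) * real (Suc j) = real (n choose j) * real (n - j)"
    using binomial_absorption[of j n] binomial_absorb_comp[of n j]
    by (metis mult.commute of_nat_mult)
  have pow: "(1 - p) ^ (n - Suc j) * (1 - p) = (1 - p) ^ (n - j)"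
    using True by (metis Suc_diff_Suc power_Suc2)
  have "pmf (binomial_pmf n p) (Suc j) * real (Suc j) * (1 - p)
          = (real (n choose Suc j) * real (Suc j)) * p ^ j * p * ((1 - p) ^ (n - Suc j) * (1 - p))"
    using assms by (simp add: algebra_simps)
  also have "\<dots> = pmf (binomial_pmf n p) j * real (n - j) * p"
    using assms unfolding choose pow by (simp add: algebra_simps)
  finally show ?thesis .
next
  case False
  then show ?thesis using assms by simp
qed

lemma binomial_pmf_Suc_ge:
  fixes p c :: real and n k j L :: nat
  defines "c \<equiv> real n * p * (1 - p)"
  assumes p: "0 < p" "p < 1" and L: "L \<le> c" and k: "k \<le> real n * p" and j: "j < k + L"
  shows "(1 - L / c) * pmf (binomial_pmf n p) j \<le> pmf (binomial_pmf n p) (Suc j)"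
proof -
  have j': "real (Suc j) \<le> real n * p + L" using j k by simp
  have n: "0 < real n"
    using j' L p by (cases n) (auto simp: c_def)
  then have c: "0 < c" using p by (simp add: c_def)
  define \<delta> where "\<delta> = L / c"
  have \<delta>: "0 \<le> \<delta>" "\<delta> \<le> 1" "(1 - \<delta>) * c = c - L"
    using c L by (auto simp: \<delta>_def field_simps)
  have "n * p + c < n"
  proof -
    have "real n * ((1 - p) * (1 - p)) > 0" using n p by simp
    then show ?thesis unfolding c_def by (simp add: algebra_simps)
  qed
  then have "j < n" using j' L by linarith
  have "(1 - \<delta>) * real (Suc j) * (1 - p) \<le> (1 - \<delta>) * (n * p + L) * (1 - p)"
    using \<delta> j' p by (intro mult_right_mono mult_left_mono) auto
  also have "\<dots> = c - L + (1 - \<delta>) * L * (1 - p)"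
    using \<delta>(3) by (simp add: c_def algebra_simps)
  also have "\<dots> \<le> c - L * p"
    using \<delta> p mult_right_mono[of "(1 - \<delta>) * L" L "1 - p"] by (simp add: algebra_simps)
  also have "\<dots> = (real n - (n * p + L)) * p"
    by (simp add: c_def algebra_simps)
  also have "\<dots> \<le> real (n - j) * p"
    using \<open>j < n\<close> j' p by (intro mult_right_mono) auto
  finally have ratio: "(1 - \<delta>) * real (Suc j) * (1 - p) \<le> real (n - j) * p" .
  define b where "b = pmf (binomial_pmf n p)"
  have "(1 - \<delta>) * b j * (real (Suc j) * (1 - p)) = b j * ((1 - \<delta>) * real (Suc j) * (1 - p))"
    by (simp add: algebra_simps)
  also have "\<dots> \<le> b j * (real (n - j) * p)"
    using ratio by (intro mult_left_mono) (auto simp: b_def)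
  also have "\<dots> = b (Suc j) * (real (Suc j) * (1 - p))"
    using binomial_pmf_Suc_ratio[of p n j] p by (simp add: b_def mult.assoc)
  finally show ?thesis
    using p unfolding \<delta>_def b_def by (simp add: mult_le_cancel_right_pos)
qed

lemma binomial_pmf_add_ge:
  fixes p c :: real and n k i L :: nat
  defines "c \<equiv> real n * p * (1 - p)"
  assumes p: "0 < p" "p < 1" and L: "L \<le> c" and k: "k \<le> real n * p" and i: "i \<le> L"
  shows "(1 - L / c) ^ i * pmf (binomial_pmf n p) k \<le> pmf (binomial_pmf n p) (k + i)"
  using i
proof (induction i)
  case 0
  then show ?case by simp
next
  case (Suc i)
  have "0 \<le> 1 - L / c"
    using L by (cases "c = 0") (auto simp: field_simps)
  then have "(1 - L / c) ^ Suc i * pmf (binomial_pmf n p) k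
               \<le> (1 - L / c) * pmf (binomial_pmf n p) (k + i)"
    using Suc by (simp add: mult.assoc mult_left_mono)
  also have "\<dots> \<le> pmf (binomial_pmf n p) (k + Suc i)"
    using binomial_pmf_Suc_ge[OF p, of L n k "k + i"] Suc.prems L k by (simp add: c_def)
  finally show ?case .
qed

lemma binomial_pmf_le_below_mean:
  fixes p :: real and n k L :: nat
  assumes p: "0 < p" "p < 1" and L: "1 \<le> L" and n: "2 * real L ^ 2 \<le> real n * p * (1 - p)"
    and k: "k \<le> real n * p"
  shows "pmf (binomial_pmf n p) k \<le> 2 / L"
proof -
  define c where "c = real n * p * (1 - p)"
  have "real L * 1 \<le> real L * (2 * real L)"
    using L by (intro mult_left_mono) auto
  then have Lc: "L \<le> c"
    using n by (simp add: c_def power2_eq_square)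
  then have c: "0 < c"
    using L by linarith
  have half: "pmf (binomial_pmf n p) k / 2 \<le> pmf (binomial_pmf n p) (k + i)" if "i < L" for i
  proof -
    have "i * (L / c) \<le> L * (L / c)"
      using that c by (intro mult_right_mono) auto
    also have "\<dots> \<le> 1 / 2"
      using n c by (simp add: c_def power2_eq_square field_simps)
    finally have "1 / 2 \<le> 1 + i * (- (L / c))"
      by simp
    also have "\<dots> \<le> (1 + (- (L / c))) ^ i"
      using Lc c by (intro Bernoulli_inequality) simp
    finally have "1 / 2 * pmf (binomial_pmf n p) k \<le> (1 - L / c) ^ i * pmf (binomial_pmf n p) k"
      by (intro mult_right_mono) auto
    also have "\<dots> \<le> pmf (binomial_pmf n p) (k + i)"
      using binomial_pmf_add_ge[OF p, of L n k i] Lc k that by (simp add: c_def)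
    finally show ?thesis
      by simp
  qed
  have "L * (pmf (binomial_pmf n p) k / 2) = (\<Sum>i<L. pmf (binomial_pmf n p) k / 2)"
    by simp
  also have "\<dots> \<le> (\<Sum>i<L. pmf (binomial_pmf n p) (k + i))"
    using half by (intro sum_mono) simp
  also have "\<dots> = measure_pmf.prob (binomial_pmf n p) ((+) k ` {..<L})"
    by (simp add: measure_measure_pmf_finite sum.reindex)
  also have "\<dots> \<le> 1"
    by (rule measure_pmf.prob_le_1)
  finally show ?thesis
    using L by (simp add: field_simps)
qed

lemma pmf_binomial_pmf_symmetric:
  assumes "p \<in> {0..1}" "k \<le> n"
  shows "pmf (binomial_pmf n p) k = pmf (binomial_pmf n (1 - p)) (n - k)"
  using assms by (simp add: binomial_symmetric[OF assms(2)] mult_ac)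

lemma binomial_pmf_le:
  fixes p :: real and n k L :: nat
  assumes p: "0 < p" "p < 1" and L: "1 \<le> L" and n: "2 * real L ^ 2 \<le> real n * p * (1 - p)"
  shows "pmf (binomial_pmf n p) k \<le> 2 / L"
proof -
  consider "k \<le> real n * p" | "real n * p < k" "k \<le> n" | "n < k"
    by linarith
  then show ?thesis
  proof cases
    case 1
    then show ?thesis using binomial_pmf_le_below_mean[OF p L n] by simp
  next
    case 2
    have "pmf (binomial_pmf n (1 - p)) (n - k) \<le> 2 / L"
      using 2 p n by (intro binomial_pmf_le_below_mean[OF _ _ L]) (simp_all add: algebra_simps)
    then show ?thesis
      using 2 p pmf_binomial_pmf_symmetric[of p k n] by (simp add: mult_ac)
  next
    case 3
    then show ?thesis using p by (simp add: binomial_eq_0)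
  qed
qed

lemma binomial_pmf_uniformly_tendsto_0:
  fixes p :: real
  assumes p: "0 < p" "p < 1"
  shows "uniform_limit UNIV (\<lambda>n k. pmf (binomial_pmf n p) k) (\<lambda>_. 0) sequentially"
proof (rule uniform_limitI)
  fix e :: real
  assume e: "0 < e"
  obtain L :: nat where L: "2 / e < L"
    using reals_Archimedean2 by blast
  moreover have "0 < 2 / e"
    using e by simp
  ultimately have "0 < real L"
    by linarith
  then have L1: "1 \<le> L"
    by simp
  have Le: "2 / L < e"
    using L e \<open>0 < real L\<close> by (simp add: divide_less_eq mult.commute)
  have "\<forall>\<^sub>F n in sequentially. 2 * real L ^ 2 \<le> real n * p * (1 - p)"
  proof -
    have "filterlim (\<lambda>n. p * (1 - p) * real n) at_top sequentially"
      using p by (intro filterlim_tendsto_pos_mult_at_top[OF tendsto_const] filterlim_real_sequentially)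
        auto
    then show ?thesis
      by (simp add: filterlim_at_top mult_ac)
  qed
  then show "\<forall>\<^sub>F n in sequentially. \<forall>k\<in>UNIV. dist (pmf (binomial_pmf n p) k) 0 < e"
  proof eventually_elim
    case (elim n)
    have "pmf (binomial_pmf n p) k < e" for k
      using binomial_pmf_le[OF p L1 elim, of k] Le by linarith
    then show ?case
      by (simp add: dist_real_def)
  qed
qed

section \<open>Uniform tuples with odd parity\<close>

definition preds_on :: "'a set \<Rightarrow> ('a \<Rightarrow> bool) set" where
  "preds_on V = PiE_dflt V False (\<lambda>_. UNIV)"

lemma mem_preds_on_iff: "g \<in> preds_on V \<longleftrightarrow> (\<forall>c. g c \<longrightarrow> c \<in> V)"
  unfolding preds_on_def PiE_dflt_def by auto

lemma finite_preds_on: "finite V \<Longrightarrow> finite (preds_on V)"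
  unfolding preds_on_def by (intro finite_PiE_dflt) auto

lemma preds_on_nonempty: "preds_on V \<noteq> {}"
  unfolding preds_on_def by simp

lemma PiE_dflt_preds_onD:
  assumes "h \<in> PiE_dflt A (\<lambda>_. False) (\<lambda>_. preds_on V)" "h i c"
  shows "i \<in> A \<and> c \<in> V"
  using assms by (cases "i \<in> A") (auto simp: PiE_dflt_def mem_preds_on_iff)

definition odd_tuples :: "nat \<Rightarrow> 'a set \<Rightarrow> (nat \<Rightarrow> 'a \<Rightarrow> bool) set" where
  "odd_tuples n V = {f. (\<forall>i c. f i c \<longrightarrow> i \<in> {1..n} \<and> c \<in> V) \<and>
                        (\<forall>c\<in>V. odd (card {i \<in> {1..n}. f i c}))}"

lemma Omega_eq_odd_tuples: "Omega n s = odd_tuples n (Vset s)"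
  unfolding Omega_def odd_tuples_def ..

definition odd_completion :: "nat \<Rightarrow> 'a set \<Rightarrow> (nat \<Rightarrow> 'a \<Rightarrow> bool) \<Rightarrow> nat \<Rightarrow> 'a \<Rightarrow> bool" where
  "odd_completion N V h = h(Suc N := (\<lambda>c. c \<in> V \<and> even (card {i \<in> {1..N}. h i c})))"

lemma card_filter_atLeastAtMost_Suc:
  "card {i \<in> {1..Suc N}. P i} = card {i \<in> {1..N}. P i} + (if P (Suc N) then 1 else 0)"
proof -
  have "{i \<in> {1..Suc N}. P i} = (if P (Suc N) then insert (Suc N) else id) {i \<in> {1..N}. P i}"
    by (auto simp: le_Suc_eq)
  then show ?thesis
    by simp
qed

lemma odd_completion_other: "i \<noteq> Suc N \<Longrightarrow> odd_completion N V h i = h i"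
  by (simp add: odd_completion_def)

lemma filter_odd_completion: "{i \<in> {1..N}. P (odd_completion N V h i)} = {i \<in> {1..N}. P (h i)}"
  by (auto simp: odd_completion_other)

lemma odd_completion_mem_odd_tuples:
  assumes h: "h \<in> PiE_dflt {1..N} (\<lambda>_. False) (\<lambda>_. preds_on V)"
  shows "odd_completion N V h \<in> odd_tuples (Suc N) V"
proof -
  have "odd_completion N V h i c \<Longrightarrow> i \<in> {1..Suc N} \<and> c \<in> V" for i c
    by (auto simp: odd_completion_def split: if_splits dest: PiE_dflt_preds_onD[OF h])
  moreover have "odd (card {i \<in> {1..Suc N}. odd_completion N V h i c})" if "c \<in> V" for c
    using that card_filter_atLeastAtMost_Suc[of N "\<lambda>i. odd_completion N V h i c"]
      filter_odd_completion[of N "\<lambda>g. g c"]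
    by (simp add: odd_completion_def)
  ultimately show ?thesis
    unfolding odd_tuples_def by blast
qed

lemma odd_tuples_supportD: "f \<in> odd_tuples n V \<Longrightarrow> f i c \<Longrightarrow> i \<in> {1..n} \<and> c \<in> V"
  unfolding odd_tuples_def by blast

lemma odd_tuples_parityD: "f \<in> odd_tuples n V \<Longrightarrow> c \<in> V \<Longrightarrow> odd (card {i \<in> {1..n}. f i c})"
  unfolding odd_tuples_def by blast

lemma odd_completion_restrict:
  assumes f: "f \<in> odd_tuples (Suc N) V"
  shows "odd_completion N V (f(Suc N := (\<lambda>_. False))) = f"
proof -
  have "f (Suc N) c \<longleftrightarrow> c \<in> V \<and> even (card {i \<in> {1..N}. f i c})" for c
    using odd_tuples_supportD[OF f, of "Suc N" c] odd_tuples_parityD[OF f, of c]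
      card_filter_atLeastAtMost_Suc[of N "\<lambda>i. f i c"]
    by (cases "f (Suc N) c") auto
  moreover have "{i \<in> {1..N}. (f(Suc N := (\<lambda>_. False))) i c} = {i \<in> {1..N}. f i c}" for c
    by auto
  ultimately show ?thesis
    by (auto simp: odd_completion_def fun_eq_iff)
qed

lemma restrict_mem_PiE_dflt:
  assumes f: "f \<in> odd_tuples (Suc N) V"
  shows "f(Suc N := (\<lambda>_. False)) \<in> PiE_dflt {1..N} (\<lambda>_. False) (\<lambda>_. preds_on V)"
  unfolding PiE_dflt_def mem_preds_on_iff
  by (auto simp: fun_eq_iff le_Suc_eq dest: odd_tuples_supportD[OF f])

lemma bij_betw_odd_completion:
  "bij_betw (odd_completion N V) (PiE_dflt {1..N} (\<lambda>_. False) (\<lambda>_. preds_on V))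
     (odd_tuples (Suc N) V)"
proof (rule bij_betw_byWitness[where f' = "\<lambda>f. f(Suc N := (\<lambda>_. False))"])
  show "\<forall>h \<in> PiE_dflt {1..N} (\<lambda>_. False) (\<lambda>_. preds_on V).
          (odd_completion N V h)(Suc N := (\<lambda>_. False)) = h"
    by (auto simp: odd_completion_def PiE_dflt_def)
  show "\<forall>f \<in> odd_tuples (Suc N) V. odd_completion N V (f(Suc N := (\<lambda>_. False))) = f"
    using odd_completion_restrict by blast
  show "odd_completion N V ` PiE_dflt {1..N} (\<lambda>_. False) (\<lambda>_. preds_on V) \<subseteq> odd_tuples (Suc N) V"
    using odd_completion_mem_odd_tuples by blast
  show "(\<lambda>f. f(Suc N := (\<lambda>_. False))) ` odd_tuples (Suc N) V
          \<subseteq> PiE_dflt {1..N} (\<lambda>_. False) (\<lambda>_. preds_on V)"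
    using restrict_mem_PiE_dflt by blast
qed

lemma map_pmf_eq_bernoulli_pmf: "map_pmf P M = bernoulli_pmf (measure_pmf.prob M {x. P x})"
proof (rule pmf_eqI)
  fix b :: bool
  have "P -` {False} = space (measure_pmf M) - {x. P x}"
    by auto
  then have "measure_pmf.prob M (P -` {False}) = 1 - measure_pmf.prob M {x. P x}"
    using measure_pmf.prob_compl[of "{x. P x}" M] by simp
  then show "pmf (map_pmf P M) b = pmf (bernoulli_pmf (measure_pmf.prob M {x. P x})) b"
    by (cases b) (auto simp: pmf_map vimage_def)
qed

lemma odd_tuples_count_binomial:
  assumes V: "finite V" and P: "\<not> P (\<lambda>_. False)"
  shows "map_pmf (\<lambda>f. card {i \<in> {1..N}. P (f i)}) (pmf_of_set (odd_tuples (Suc N) V))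
           = binomial_pmf N (measure_pmf.prob (pmf_of_set (preds_on V)) {g. P g})"
    (is "_ = binomial_pmf N ?q")
proof -
  let ?H = "PiE_dflt {1..N} (\<lambda>_. False) (\<lambda>_. preds_on V)"
  let ?G = "Pi_pmf {1..N} (\<lambda>_. False) (\<lambda>_. pmf_of_set (preds_on V))"
  have "pmf_of_set (odd_tuples (Suc N) V) = map_pmf (odd_completion N V) (pmf_of_set ?H)"
    using V by (intro map_pmf_of_set_bij_betw[symmetric] bij_betw_odd_completion)
      (auto simp: finite_preds_on preds_on_nonempty)
  also have "pmf_of_set ?H = ?G"
    using V by (intro Pi_pmf_of_set[symmetric]) (auto simp: finite_preds_on preds_on_nonempty)
  finally have law: "pmf_of_set (odd_tuples (Suc N) V) = map_pmf (odd_completion N V) ?G" .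
  have "map_pmf (\<lambda>f. card {i \<in> {1..N}. P (f i)}) (pmf_of_set (odd_tuples (Suc N) V))
          = map_pmf (\<lambda>h. card {i \<in> {1..N}. h i}) (map_pmf (\<lambda>h. P \<circ> h) ?G)"
    unfolding law map_pmf_comp filter_odd_completion comp_def ..
  also have "map_pmf (\<lambda>h. P \<circ> h) ?G = Pi_pmf {1..N} False (\<lambda>_. map_pmf P (pmf_of_set (preds_on V)))"
    using P by (intro Pi_pmf_map[symmetric]) auto
  also have "\<dots> = Pi_pmf {1..N} False (\<lambda>_. bernoulli_pmf ?q)"
    by (simp add: map_pmf_eq_bernoulli_pmf)
  also have "map_pmf (\<lambda>h. card {i \<in> {1..N}. h i}) \<dots> = binomial_pmf N ?q"
    by (intro binomial_pmf_altdef'[symmetric]) auto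
  finally show ?thesis .
qed

section \<open>A single fluid\<close>

definition percolates :: "nat \<Rightarrow> (cell \<Rightarrow> bool) \<Rightarrow> bool" where
  "percolates s g \<longleftrightarrow> (\<exists>p. p \<noteq> [] \<and> distinct p \<and> set p \<subseteq> Vset s \<and>
      nbr (0, 0) (hd p) \<and> (\<forall>l. Suc l < length p \<longrightarrow> nbr (p ! l) (p ! Suc l)) \<and>
      boundary s (last p) \<and> (\<forall>c\<in>set p. g c))"

lemma flows_iff_percolates: "flows s i f \<longleftrightarrow> percolates s (f i)"
  unfolding flows_def percolates_def ..

lemma not_percolates_empty: "\<not> percolates s (\<lambda>_. False)"
proof
  assume "percolates s (\<lambda>_. False)"
  then obtain p :: "cell list" where "p \<noteq> []" "\<forall>c\<in>set p. False"
    unfolding percolates_def by blast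
  then show False
    using hd_in_set by blast
qed

lemma finite_Vset: "finite (Vset s)"
proof -
  have "Mset s \<subseteq> {-int s..int s} \<times> {-int s..int s}"
    by (auto simp: Mset_def hexnorm_def)
  then show ?thesis
    unfolding Vset_def by (auto intro: finite_subset)
qed

lemma hexnorm_eq_1_iff:
  "hexnorm (x, y) = 1 \<longleftrightarrow> (x, y) \<in> {(1, 0), (-1, 0), (0, 1), (0, -1), (1, -1), (-1, 1)}"
  unfolding hexnorm_def by (simp add: max_def abs_if) arith

lemma boundary_axis_cell:
  assumes "s \<ge> 2"
  shows "boundary s (int s - 1, 0)"
proof -
  define a where "a = int s - 1"
  let ?R = "{(a - 1, 0), (a, 1), (a, -1), (a + 1, -1), (a - 1, 1 :: int)}"
  have near: "(x, y) \<in> ?R" if "hexnorm (x, y) \<le> a" "hexnorm (a - x, 0 - y) = 1" for x y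
  proof -
    have "(x, y) \<noteq> (a + 1, 0)"
      using that(1) assms by (auto simp: hexnorm_def a_def)
    then show ?thesis
      using that(2) unfolding hexnorm_eq_1_iff by auto
  qed
  have "{d \<in> Mset s. nbr (a, 0) d} \<subseteq> ?R"
  proof
    fix d
    assume d: "d \<in> {d \<in> Mset s. nbr (a, 0) d}"
    obtain x y where "d = (x, y)"
      by (cases d)
    with d show "d \<in> ?R"
      using near[of x y] by (simp add: Mset_def nbr_def a_def)
  qed
  then have "card {d \<in> Mset s. nbr (a, 0) d} \<le> card ?R"
    by (rule card_mono[rotated]) simp
  also have "\<dots> \<le> 5"
    using card_length[of "[(a - 1, 0), (a, 1), (a, -1), (a + 1, -1), (a - 1, 1)]"] by simp
  finally have "card {d \<in> Mset s. nbr (a, 0) d} < 6"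
    by simp
  moreover have "(a, 0) \<in> Mset s"
    using assms by (simp add: Mset_def hexnorm_def a_def)
  ultimately show ?thesis
    by (simp add: boundary_def a_def)
qed

lemma percolates_full:
  assumes s: "s \<ge> 2"
  shows "percolates s (\<lambda>c. c \<in> Vset s)"
proof -
  define p where "p = map (\<lambda>j. (int j, 0 :: int)) [1..<s]"
  have "p \<noteq> []" "hd p = (1, 0)" "last p = (int s - 1, 0)"
    using s by (simp_all add: p_def hd_map last_map)
  moreover have "distinct p"
    by (simp add: p_def distinct_map inj_on_def)
  moreover have "set p \<subseteq> Vset s"
    by (auto simp: p_def Vset_def Mset_def hexnorm_def)
  moreover have "\<forall>l. Suc l < length p \<longrightarrow> nbr (p ! l) (p ! Suc l)"
    by (simp add: p_def nbr_def hexnorm_def)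
  ultimately show ?thesis
    unfolding percolates_def using boundary_axis_cell[OF s]
    by (intro exI[of _ p]) (auto simp: nbr_def hexnorm_def)
qed

definition percolation_prob :: "nat \<Rightarrow> real" where
  "percolation_prob s = measure_pmf.prob (pmf_of_set (preds_on (Vset s))) {g. percolates s g}"

lemma percolation_prob_pos: "s \<ge> 2 \<Longrightarrow> 0 < percolation_prob s"
  and percolation_prob_less_1: "percolation_prob s < 1"
proof -
  let ?M = "pmf_of_set (preds_on (Vset s))"
  have pmf_pos: "0 < pmf ?M g" if "g \<in> preds_on (Vset s)" for g
    using that by (simp add: card_gt_0_iff finite_preds_on finite_Vset preds_on_nonempty)
  show "0 < percolation_prob s" if "s \<ge> 2"
  proof -
    have "0 < pmf ?M (\<lambda>c. c \<in> Vset s)"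
      by (intro pmf_pos) (simp add: mem_preds_on_iff)
    also have "\<dots> \<le> percolation_prob s"
      unfolding percolation_prob_def measure_pmf_single[symmetric]
      using percolates_full[OF that] by (intro measure_pmf.finite_measure_mono) auto
    finally show ?thesis .
  qed
  have "percolation_prob s \<le> measure_pmf.prob ?M (space ?M - {\<lambda>_. False})"
    unfolding percolation_prob_def
    using not_percolates_empty by (intro measure_pmf.finite_measure_mono) auto
  also have "\<dots> = 1 - pmf ?M (\<lambda>_. False)"
    using measure_pmf.prob_compl[of "{\<lambda>_. False}" ?M] by (simp add: measure_pmf_single)
  also have "\<dots> < 1"
    using pmf_pos[of "\<lambda>_. False"] by (simp add: mem_preds_on_iff)
  finally show "percolation_prob s < 1" .
qed

definition flow_count :: "nat \<Rightarrow> nat \<Rightarrow> (nat \<Rightarrow> cell \<Rightarrow> bool) \<Rightarrow> nat" where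
  "flow_count N s f = card {i \<in> {1..N}. flows s i f}"

lemma flow_count_le: "flow_count N s f \<le> N"
proof -
  have "card {i \<in> {1..N}. flows s i f} \<le> card {1..N}"
    by (rule card_mono) auto
  then show ?thesis
    by (simp add: flow_count_def)
qed

lemma map_pmf_flow_count:
  "map_pmf (flow_count N s) (Pr (Suc N) s) = binomial_pmf N (percolation_prob s)"
  unfolding Pr_def Omega_eq_odd_tuples flow_count_def[abs_def] flows_iff_percolates
    percolation_prob_def
  using odd_tuples_count_binomial[where P = "percolates s", OF finite_Vset not_percolates_empty] .

lemma ps_eq_percolation_prob: "ps s = percolation_prob s"
proof -
  have "{i \<in> {1..1}. flows s i f} = (if flows s 1 f then {1} else {})" for f
    by auto
  then have "{f. flows s 1 f} = flow_count 1 s -` {1}"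
    by (auto simp: flow_count_def split: if_splits)
  then have "ps s = measure_pmf.prob (map_pmf (flow_count 1 s) (Pr 2 s)) {1}"
    by (simp add: ps_def)
  also have "\<dots> = pmf (binomial_pmf 1 (percolation_prob s)) 1"
    using map_pmf_flow_count[of 1 s] by (simp add: numeral_2_eq_2 measure_pmf_single)
  also have "\<dots> = percolation_prob s"
    using percolation_prob_less_1[of s] measure_nonneg[of _ "{g. percolates s g}"]
    by (simp add: percolation_prob_def)
  finally show ?thesis .
qed

section \<open>Comparison of the two distribution functions\<close>

lemma sum_Xind_eq_flow_count: "(\<Sum>i = 1..N. Xind s i f) = real (flow_count N s f)"
proof -
  have "(\<Sum>i = 1..N. Xind s i f) = real (card {i \<in> {1..N}. flows s i f})"
    unfolding Xind_def by (simp add: sum.If_cases Int_def)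
  then show ?thesis
    by (simp add: flow_count_def)
qed

lemma Zbar_Suc:
  assumes "1 \<le> N"
  shows "Zbar (Suc N) s f = real (flow_count N s f) / N - ps s"
proof -
  have "Zbar (Suc N) s f = ((\<Sum>i = 1..N. Xind s i f) - N * ps s) / N"
    unfolding Zbar_def Yv_def sum_subtractf by simp
  then show ?thesis
    using assms unfolding sum_Xind_eq_flow_count by (simp add: field_simps)
qed

lemma Ybar_Suc: "Ybar (Suc N) s f = (real (flow_count N s f) + Xind s (Suc N) f) / Suc N - ps s"
proof -
  have "(\<Sum>i = 1..Suc N. Xind s i f) = real (flow_count N s f) + Xind s (Suc N) f"
    unfolding sum_Xind_eq_flow_count[symmetric] by simp
  then show ?thesis
    unfolding Ybar_def Xbar_def by simp
qed

lemma abs_diff_lt_1_if_mean_le_changes: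
  fixes S N :: nat and t u :: real
  assumes N: "1 \<le> N" and S: "S \<le> N" and t: "0 \<le> t" "t \<le> 1"
    and changes: "(S / N \<le> u) \<noteq> ((S + t) / Suc N \<le> u)"
  shows "\<bar>real S - N * u\<bar> < 1"
proof (cases "S / N \<le> u")
  case True
  then have "S \<le> N * u" and "u * Suc N < S + t"
    using N changes by (simp_all add: field_simps)
  moreover have "0 \<le> u"
    using True order_trans[OF divide_nonneg_nonneg[of "real S" "real N"]] by simp
  then have "N * u \<le> u * Suc N"
    by (simp add: algebra_simps)
  ultimately show ?thesis
    using t unfolding abs_less_iff by linarith
next
  case False
  then have "N * u < S" and "S + t \<le> u * Suc N"
    using N changes by (simp_all add: field_simps)
  moreover have "S / N \<le> 1"
    using N S by simp
  then have "u < 1"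
    using False by linarith
  ultimately show ?thesis
    using t unfolding abs_less_iff by (simp add: algebra_simps)
qed

lemma nat_eq_floor_or_ceiling:
  assumes "\<bar>real S - x\<bar> < 1"
  shows "S = nat \<lfloor>x\<rfloor> \<or> S = nat \<lceil>x\<rceil>"
proof (cases "real S \<le> x")
  case True
  then have "\<lfloor>x\<rfloor> = int S"
    using assms by (simp add: floor_eq_iff)
  then show ?thesis by simp
next
  case False
  then have "\<lceil>x\<rceil> = int S"
    using assms by (simp add: ceiling_eq_iff)
  then show ?thesis by simp
qed

lemma abs_prob_diff_le_prob_sym_diff:
  "\<bar>measure_pmf.prob M A - measure_pmf.prob M B\<bar> \<le> measure_pmf.prob M (sym_diff A B)"
proof -
  have le: "measure_pmf.prob M X \<le> measure_pmf.prob M Y + measure_pmf.prob M (sym_diff X Y)"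
    for X Y :: "'a set"
  proof -
    have "measure_pmf.prob M X \<le> measure_pmf.prob M (Y \<union> (sym_diff X Y))"
      by (rule measure_pmf.finite_measure_mono) auto
    also have "\<dots> \<le> measure_pmf.prob M Y + measure_pmf.prob M (sym_diff X Y)"
      by (rule measure_Un_le) auto
    finally show ?thesis .
  qed
  show ?thesis
    using le[of A B] le[of B A] by (simp add: Un_commute)
qed

lemma abs_distfun_Zbar_Ybar_le:
  assumes N: "1 \<le> N" and \<epsilon>: "\<And>k. pmf (binomial_pmf N (ps s)) k \<le> \<epsilon>"
  shows "\<bar>distfun (Pr (Suc N) s) (Zbar (Suc N) s) x - distfun (Pr (Suc N) s) (Ybar (Suc N) s) x\<bar>
           \<le> 2 * \<epsilon>"
proof -
  let ?M = "Pr (Suc N) s" and ?S = "flow_count N s"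
  define A where "A = {f. Zbar (Suc N) s f \<le> x}"
  define B where "B = {f. Ybar (Suc N) s f \<le> x}"
  define a where "a = nat \<lfloor>N * (x + ps s)\<rfloor>"
  define b where "b = nat \<lceil>N * (x + ps s)\<rceil>"
  have "sym_diff A B \<subseteq> ?S -` {a} \<union> ?S -` {b}"
  proof
    fix f
    assume "f \<in> sym_diff A B"
    then have "(?S f / N \<le> x + ps s) \<noteq> ((?S f + Xind s (Suc N) f) / Suc N \<le> x + ps s)"
      using N by (auto simp: A_def B_def Zbar_Suc Ybar_Suc)
    moreover have "0 \<le> Xind s (Suc N) f" "Xind s (Suc N) f \<le> 1"
      by (simp_all add: Xind_def)
    ultimately have "\<bar>real (?S f) - N * (x + ps s)\<bar> < 1"
      using abs_diff_lt_1_if_mean_le_changes[OF N flow_count_le] by blast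
    then show "f \<in> ?S -` {a} \<union> ?S -` {b}"
      unfolding a_def b_def using nat_eq_floor_or_ceiling by blast
  qed
  then have "measure_pmf.prob ?M (sym_diff A B)
               \<le> measure_pmf.prob ?M (?S -` {a}) + measure_pmf.prob ?M (?S -` {b})"
    by (intro order_trans[OF measure_pmf.finite_measure_mono measure_Un_le]) auto
  also have "\<dots> = pmf (binomial_pmf N (ps s)) a + pmf (binomial_pmf N (ps s)) b"
    unfolding measure_map_pmf[symmetric] map_pmf_flow_count ps_eq_percolation_prob
      measure_pmf_single ..
  also have "\<dots> \<le> 2 * \<epsilon>"
    using \<epsilon>[of a] \<epsilon>[of b] by simp
  finally show ?thesis
    using abs_prob_diff_le_prob_sym_diff[of ?M A B] unfolding distfun_def A_def B_def by linarith
qed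

theorem lemma3:
  fixes s :: nat
  assumes "s \<ge> 2"
  shows "uniform_limit UNIV
           (\<lambda>n x. distfun (Pr n s) (Zbar n s) x - distfun (Pr n s) (Ybar n s) x)
           (\<lambda>x. 0) sequentially"
proof (rule uniform_limitI)
  fix e :: real
  assume e: "0 < e"
  let ?D = "\<lambda>n x. distfun (Pr n s) (Zbar n s) x - distfun (Pr n s) (Ybar n s) x"
  have "0 < ps s" "ps s < 1"
    using percolation_prob_pos[OF assms] percolation_prob_less_1
    by (simp_all add: ps_eq_percolation_prob)
  then have "\<forall>\<^sub>F N in sequentially. \<forall>k\<in>UNIV. dist (pmf (binomial_pmf N (ps s)) k) 0 < e / 3"
    using e by (intro uniform_limitD[OF binomial_pmf_uniformly_tendsto_0]) auto
  moreover have "\<forall>\<^sub>F N in sequentially. 1 \<le> N"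
    by (rule eventually_ge_at_top)
  ultimately have "\<forall>\<^sub>F N in sequentially. \<forall>x\<in>UNIV. dist (?D (Suc N) x) 0 < e"
  proof eventually_elim
    case (elim N)
    then have "pmf (binomial_pmf N (ps s)) k \<le> e / 3" for k
      by (simp add: dist_real_def less_imp_le)
    then have "\<bar>?D (Suc N) x\<bar> \<le> 2 * (e / 3)" for x
      by (rule abs_distfun_Zbar_Ybar_le[OF elim(2)])
    then show ?case
      using e by (simp add: dist_real_def order_le_less_trans[of _ "2 * (e / 3)"])
  qed
  then show "\<forall>\<^sub>F n in sequentially. \<forall>x\<in>UNIV. dist (?D n x) 0 < e"
    by (rule eventually_sequentially_Suc[THEN iffD1])
qed

end
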